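(* Let $t\in[0,1]$. For each $n$ let $\boldsymbol{M}\in\mathbb{R}^{n\times n}$ be a deterministic matrix with $\|\boldsymbol{M}\|_{\mathrm{op}}\le1$, and let $b=b_n$ satisfy $|b|=\Omega(n^{-t/(1+t)})$ if $t<1$, or $|b|=\omega(n^{-1/2})$ if $t=1$. Let $\boldsymbol{w}$ and $\boldsymbol{\xi}$ be independent random vectors in $\mathbb{R}^n$ with i.i.d. entries from $\mathbb{P}_w\in\mathcal{D}_1\cup\mathcal{D}_2$ and $\mathbb{P}_\xi\in\mathcal{D}_{1+t}$ respectively (not depending on $n$). Then for any fixed $\delta>0$, $$\lim_{n\to\infty}\mathbb{P}\Bigl(\frac{|\boldsymbol{w}^\top\boldsymbol{M}\boldsymbol{\xi}|}{b\|\boldsymbol{w}\|_2^2}>\delta\Bigr)=0.$$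
   Context: For $s>0$, $\mathcal{D}_s$ is the class of distributions of $\xi$ with $\mathbb{E}[\xi]=0$ and $1\le\mathbb{E}[|\xi|^s]\le2$. $|b|=\Omega(c_n)$ means $|c_n|\le C|b|$ for a constant $C>0$; $b=\omega(c_n)$ means $|c_n|/|b|\to0$. Convention: $a/0=\infty$. *)

theory Defs
  imports "HOL-Probability.Probability"
begin

definition Dclass :: "real \<Rightarrow> real measure set" where
  "Dclass s = {P. prob_space P \<and> sets P = sets borel \<and>
      integrable P (\<lambda>x. x) \<and> (\<integral>x. x \<partial>P) = 0 \<and>
      1 \<le> (\<integral>\<^sup>+ x. ennreal (\<bar>x\<bar> powr s) \<partial>P) \<and>
      (\<integral>\<^sup>+ x. ennreal (\<bar>x\<bar> powr s) \<partial>P) \<le> 2}"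

definition vnorm :: "nat \<Rightarrow> (nat \<Rightarrow> real) \<Rightarrow> real" where
  "vnorm n x = sqrt (\<Sum>j<n. (x j)\<^sup>2)"

definition mvec :: "nat \<Rightarrow> (nat \<Rightarrow> nat \<Rightarrow> real) \<Rightarrow> (nat \<Rightarrow> real) \<Rightarrow> (nat \<Rightarrow> real)" where
  "mvec n A x = (\<lambda>i. \<Sum>j<n. A i j * x j)"

definition opnorm_le1 :: "nat \<Rightarrow> (nat \<Rightarrow> nat \<Rightarrow> real) \<Rightarrow> bool" where
  "opnorm_le1 n A \<longleftrightarrow> (\<forall>x. vnorm n (mvec n A x) \<le> vnorm n x)"

text \<open>The event |w^T M xi| / (b |w|^2) > delta, with the convention a/0 = infinity.\<close>
definition ratio_event :: "nat \<Rightarrow> (nat \<Rightarrow> nat \<Rightarrow> real) \<Rightarrow> real \<Rightarrow> real \<Rightarrow>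
    (nat \<Rightarrow> real) \<Rightarrow> (nat \<Rightarrow> real) \<Rightarrow> bool" where
  "ratio_event n A b \<delta> w xi \<longleftrightarrow>
     (let num = \<bar>\<Sum>i<n. w i * mvec n A xi i\<bar>; den = b * (vnorm n w)\<^sup>2 in
      den = 0 \<or> num / den > \<delta>)"

end

theory Submission
  imports Defs
begin

(*
  Conditionally on w, the numerator is the weighted sum \<Sum>j u_j \<xi>_j with u = M^T w, and |u| \<le> |w|
  because |M^T| = |M| \<le> 1. As w is not almost surely zero, |w|^2 \<ge> c n with probability tending
  to 1 (Chebyshev applied to the number of coordinates with |w_i| \<ge> a). It therefore suffices that
  P(|\<Sum>j u_j \<xi>_j| > \<delta> |b| R) \<rightarrow> 0 uniformly in R \<ge> c n and |u|^2 \<le> R.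

  Truncate \<xi> at level T: some coordinate exceeds T with probability at most n T^-s E[|\<xi>|^s; |\<xi>| > T],
  truncation moves the mean by at most T^(1-s) E[|\<xi>|^s; |\<xi>| > T], and Chebyshev bounds the
  truncated, recentred sum using its variance R T^(2-s) E|\<xi>|^s. For s = 1 + t and T = \<eta> \<delta> |b| n,
  all terms are of order 1 / \<kappa>_n with \<kappa>_n = (\<delta> |b| n)^s / n. If t < 1 then \<kappa>_n is bounded below,
  the variance term is made small by choosing \<eta> small, and the tail term vanishes since T \<rightarrow> \<infinity>.
  If t = 1 then \<kappa>_n \<rightarrow> \<infinity> and \<eta> = 1 will do.
*)

lemma filterlim_at_top_of_powr_ge_linear:
  fixes a :: "nat \<Rightarrow> real"
  assumes s: "s > 0" and \<kappa>: "\<kappa> > 0" and pos: "\<forall>\<^sub>F n in sequentially. 0 < a n"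
    and lower: "\<forall>\<^sub>F n in sequentially. \<kappa> * real n \<le> a n powr s"
  shows "filterlim a at_top sequentially"
proof (subst filterlim_at_top_gt[where c = 0], intro allI impI)
  fix Z :: real
  assume Z: "Z > 0"
  have "filterlim (\<lambda>n. \<kappa> * real n) at_top sequentially"
    using \<kappa> by (intro filterlim_tendsto_pos_mult_at_top[OF tendsto_const] filterlim_real_sequentially)
  then have "\<forall>\<^sub>F n in sequentially. Z powr s \<le> \<kappa> * real n"
    by (simp add: filterlim_at_top)
  with pos lower show "\<forall>\<^sub>F n in sequentially. Z \<le> a n"
  proof eventually_elim
    case (elim n)
    then have "Z powr s \<le> a n powr s"
      by linarith
    with elim(1) show ?case
      using Z s by (meson linorder_not_le powr_less_mono2 less_imp_le)
  qed
qed

lemma exists_pos_square_div_powr_le: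
  fixes A B s :: real
  assumes s: "s < 2" and A: "A \<ge> 0" and B: "B > 0"
  shows "\<exists>\<eta>>0. A * (\<eta>\<^sup>2 / \<eta> powr s) \<le> B"
proof (intro exI conjI)
  define \<eta> where "\<eta> = (B / (A + 1)) powr (1 / (2 - s))"
  show \<eta>: "\<eta> > 0"
    using A B by (simp add: \<eta>_def)
  have "\<eta>\<^sup>2 / \<eta> powr s = \<eta> powr (2 - s)"
    using \<eta> by (simp add: powr_diff powr_numeral)
  also have "\<dots> = B / (A + 1)"
    using s A B by (simp add: \<eta>_def powr_powr)
  finally have "A * (\<eta>\<^sup>2 / \<eta> powr s) = B * (A / (A + 1))"
    by simp
  also have "\<dots> \<le> B"
    using A B by (intro mult_left_le) auto
  finally show "A * (\<eta>\<^sup>2 / \<eta> powr s) \<le> B" .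
qed

lemma tendsto_0_of_eventually_le_add:
  fixes f a :: "nat \<Rightarrow> real"
  assumes f: "\<And>n. 0 \<le> f n" and a: "a \<longlonglongrightarrow> 0"
    and le: "\<And>\<epsilon>. \<epsilon> > 0 \<Longrightarrow> \<forall>\<^sub>F n in sequentially. f n \<le> a n + \<epsilon>"
  shows "f \<longlonglongrightarrow> 0"
proof (rule tendstoI)
  fix e :: real
  assume e: "e > 0"
  have "\<forall>\<^sub>F n in sequentially. a n < e / 2"
    using order_tendstoD(2)[OF a, of "e / 2"] e by simp
  moreover have "\<forall>\<^sub>F n in sequentially. f n \<le> a n + e / 2"
    using e by (intro le) simp
  ultimately show "\<forall>\<^sub>F n in sequentially. dist (f n) 0 < e"
    by eventually_elim (use f in auto)
qed

section \<open>Weighted sums of independent coordinates\<close>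

lemma integral_PiM_component:
  fixes h :: "'a \<Rightarrow> real"
  assumes "prob_space P" "j \<in> I" "h \<in> borel_measurable P"
  shows "(\<integral>x. h (x j) \<partial>PiM I (\<lambda>_. P)) = integral\<^sup>L P h"
proof -
  have "distr (PiM I (\<lambda>_. P)) P (\<lambda>x. x j) = P"
    using assms by (intro distr_PiM_component) auto
  then show ?thesis
    using assms by (metis integral_distr measurable_component_singleton)
qed

lemma integral_PiM_component_mult:
  fixes h1 h2 :: "'a \<Rightarrow> real"
  assumes P: "prob_space P" and "finite I" "j \<in> I" "k \<in> I" "j \<noteq> k"
    and "integrable P h1" "integrable P h2"
  shows "(\<integral>x. h1 (x j) * h2 (x k) \<partial>PiM I (\<lambda>_. P)) = integral\<^sup>L P h1 * integral\<^sup>L P h2"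
proof -
  interpret prob_space P by fact
  interpret product_prob_space "\<lambda>_. P" I by unfold_locales
  define f where "f i = (if i = j then h1 else if i = k then h2 else (\<lambda>_. 1))" for i
  have "(\<Prod>i\<in>I. f i (x i)) = h1 (x j) * h2 (x k)" for x
    using assms by (subst prod.mono_neutral_right[of I "{j, k}"]) (auto simp: f_def)
  moreover have "(\<Prod>i\<in>I. integral\<^sup>L P (f i)) = integral\<^sup>L P h1 * integral\<^sup>L P h2"
    using assms by (subst prod.mono_neutral_right[of I "{j, k}"])
      (auto simp: f_def prob_space.prob_space)
  moreover have "(\<integral>x. (\<Prod>i\<in>I. f i (x i)) \<partial>PiM I (\<lambda>_. P)) = (\<Prod>i\<in>I. integral\<^sup>L P (f i))"
    using assms by (intro product_integral_prod) (auto simp: f_def)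
  ultimately show ?thesis by simp
qed

lemma integral_PiM_weighted_sum_square:
  fixes g :: "'a \<Rightarrow> real"
  assumes P: "prob_space P" and I: "finite I" and g: "g \<in> borel_measurable P"
    and bnd: "\<And>x. \<bar>g x\<bar> \<le> K" and mean: "integral\<^sup>L P g = 0"
  shows "(\<integral>x. (\<Sum>j\<in>I. u j * g (x j))\<^sup>2 \<partial>PiM I (\<lambda>_. P))
       = (\<Sum>j\<in>I. (u j)\<^sup>2) * integral\<^sup>L P (\<lambda>x. (g x)\<^sup>2)"
proof -
  interpret P: prob_space P by fact
  interpret Q: prob_space "PiM I (\<lambda>_. P)" by (simp add: P prob_space_PiM)
  have int_g: "integrable P g"
    using g bnd by (intro P.integrable_const_bound) auto
  have int_pair: "integrable (PiM I (\<lambda>_. P)) (\<lambda>x. g (x j) * g (x k))" if "j \<in> I" "k \<in> I" for j k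
    using that g bnd by (intro Q.integrable_const_bound[where B = "K * K"])
      (auto simp: abs_mult intro!: mult_mono' order_trans[OF _ bnd])
  have moment: "(\<integral>x. g (x j) * g (x k) \<partial>PiM I (\<lambda>_. P))
      = (if j = k then integral\<^sup>L P (\<lambda>x. (g x)\<^sup>2) else 0)" if "j \<in> I" "k \<in> I" for j k
    using that integral_PiM_component[OF P _, of j I "\<lambda>x. (g x)\<^sup>2"]
      integral_PiM_component_mult[OF P I that _ int_g int_g] g mean
    by (auto simp: power2_eq_square)
  have "(\<integral>x. (\<Sum>j\<in>I. u j * g (x j))\<^sup>2 \<partial>PiM I (\<lambda>_. P))
      = (\<integral>x. (\<Sum>j\<in>I. \<Sum>k\<in>I. u j * u k * (g (x j) * g (x k))) \<partial>PiM I (\<lambda>_. P))"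
    by (simp add: power2_eq_square sum_product mult_ac)
  also have "\<dots> = (\<Sum>j\<in>I. \<Sum>k\<in>I. u j * u k * (\<integral>x. g (x j) * g (x k) \<partial>PiM I (\<lambda>_. P)))"
    using int_pair by (simp add: Bochner_Integration.integral_sum Bochner_Integration.integrable_sum)
  also have "\<dots> = (\<Sum>j\<in>I. \<Sum>k\<in>I. if k = j then (u j)\<^sup>2 * integral\<^sup>L P (\<lambda>x. (g x)\<^sup>2) else 0)"
    by (intro sum.cong refl) (auto simp: moment power2_eq_square)
  also have "\<dots> = (\<Sum>j\<in>I. (u j)\<^sup>2 * integral\<^sup>L P (\<lambda>x. (g x)\<^sup>2))"
    using I by simp
  finally show ?thesis by (simp add: sum_distrib_right)
qed

lemma Chebyshev_PiM_weighted_sum: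
  fixes g :: "'a \<Rightarrow> real"
  assumes P: "prob_space P" and I: "finite I" and g: "g \<in> borel_measurable P"
    and bnd: "\<And>x. \<bar>g x\<bar> \<le> K" and mean: "integral\<^sup>L P g = 0"
    and var: "integral\<^sup>L P (\<lambda>x. (g x)\<^sup>2) \<le> V" and L: "L > 0"
  shows "measure (PiM I (\<lambda>_. P)) {x \<in> space (PiM I (\<lambda>_. P)). L \<le> \<bar>\<Sum>j\<in>I. u j * g (x j)\<bar>}
          \<le> (\<Sum>j\<in>I. (u j)\<^sup>2) * V / L\<^sup>2"
proof -
  interpret P: prob_space P by fact
  interpret Q: prob_space "PiM I (\<lambda>_. P)" by (simp add: P prob_space_PiM)
  define S where "S = (\<lambda>x. \<Sum>j\<in>I. u j * g (x j))"
  have [measurable]: "S \<in> borel_measurable (PiM I (\<lambda>_. P))"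
    using g unfolding S_def by measurable
  have S_bnd: "\<bar>S x\<bar> \<le> (\<Sum>j\<in>I. \<bar>u j\<bar> * K)" for x
    unfolding S_def using bnd
    by (intro order_trans[OF sum_abs] sum_mono) (simp add: abs_mult mult_left_mono)
  have int_S: "integrable (PiM I (\<lambda>_. P)) S"
    using S_bnd by (intro Q.integrable_const_bound) auto
  have "(S x)\<^sup>2 \<le> (\<Sum>j\<in>I. \<bar>u j\<bar> * K)\<^sup>2" for x
    using power_mono[OF S_bnd abs_ge_zero, of x 2] by simp
  then have int_S2: "integrable (PiM I (\<lambda>_. P)) (\<lambda>x. (S x)\<^sup>2)"
    by (intro Q.integrable_const_bound) auto
  have ES: "Q.expectation S = 0"
    using g bnd mean int_S unfolding S_def
    by (subst Bochner_Integration.integral_sum)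
      (auto simp: integral_PiM_component[OF P] intro!: Q.integrable_const_bound[where B = K])
  have "Q.prob {x \<in> space (PiM I (\<lambda>_. P)). L \<le> \<bar>S x - Q.expectation S\<bar>} \<le> Q.variance S / L\<^sup>2"
    by (rule Q.Chebyshev_inequality) (use int_S2 L in auto)
  also have "Q.variance S = (\<Sum>j\<in>I. (u j)\<^sup>2) * integral\<^sup>L P (\<lambda>x. (g x)\<^sup>2)"
    using ES integral_PiM_weighted_sum_square[OF P I g bnd mean] by (simp add: S_def)
  also have "\<dots> / L\<^sup>2 \<le> (\<Sum>j\<in>I. (u j)\<^sup>2) * V / L\<^sup>2"
    by (intro divide_right_mono mult_left_mono var) (auto intro: sum_nonneg)
  finally show ?thesis using ES by (simp add: S_def)
qed

lemma measure_PiM_ex_component_le: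
  assumes P: "prob_space P" and I: "finite I" and A: "A \<in> sets P"
  shows "measure (PiM I (\<lambda>_. P)) {x \<in> space (PiM I (\<lambda>_. P)). \<exists>j\<in>I. x j \<in> A}
         \<le> real (card I) * measure P A"
proof -
  interpret prob_space P by fact
  interpret product_prob_space "\<lambda>_. P" I by unfold_locales
  have "{x \<in> space (PiM I (\<lambda>_. P)). \<exists>j\<in>I. x j \<in> A}
      = (\<Union>j\<in>I. {x \<in> space (PiM I (\<lambda>_. P)). x j \<in> A})" by auto
  also have "measure (PiM I (\<lambda>_. P)) \<dots> \<le> (\<Sum>j\<in>I. measure (PiM I (\<lambda>_. P)) {x \<in> space (PiM I (\<lambda>_. P)). x j \<in> A})"
    using A I by (intro measure_UNION_le) auto
  also have "\<dots> = (\<Sum>j\<in>I. measure P A)"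
    using A by (intro sum.cong refl) (simp add: measure_def emeasure_PiM_Collect_single)
  finally show ?thesis by simp
qed

lemma measure_pair_le_of_sections:
  assumes W: "prob_space W" and X: "prob_space X" and E: "E \<in> sets (W \<Otimes>\<^sub>M X)"
    and B: "B \<in> sets W" and G: "0 \<le> G"
    and small_section: "\<And>w. w \<in> space W - B \<Longrightarrow> measure X (Pair w -` E) \<le> G"
  shows "measure (W \<Otimes>\<^sub>M X) E \<le> measure W B + G"
proof -
  interpret W: prob_space W by fact
  interpret X: prob_space X by fact
  interpret WX: prob_space "W \<Otimes>\<^sub>M X" by (intro prob_space_pair W X)
  have "emeasure X (Pair w -` E) \<le> indicator B w + ennreal G" if "w \<in> space W" for w
  proof (cases "w \<in> B")
    case True
    then show ?thesis using X.emeasure_le_1[of "Pair w -` E"] by (simp add: order_trans)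
  next
    case False
    then show ?thesis
      using small_section[of w] that by (simp add: X.emeasure_eq_measure ennreal_leI)
  qed
  then have "emeasure (W \<Otimes>\<^sub>M X) E \<le> (\<integral>\<^sup>+ w. indicator B w + ennreal G \<partial>W)"
    by (simp add: X.emeasure_pair_measure_alt[OF E] nn_integral_mono)
  also have "\<dots> = ennreal (measure W B + G)"
    using B G by (simp add: nn_integral_add W.emeasure_eq_measure W.prob_space ennreal_plus)
  finally show ?thesis
    using G by (simp add: WX.emeasure_eq_measure flip: ennreal_plus)
qed

section \<open>Truncation under an s-th moment condition\<close>

definition truncate :: "real \<Rightarrow> real \<Rightarrow> real" where
  "truncate T x = (if \<bar>x\<bar> \<le> T then x else 0)"

definition tail_moment :: "real measure \<Rightarrow> real \<Rightarrow> real \<Rightarrow> real" where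
  "tail_moment P s T = (\<integral>x. (if T < \<bar>x\<bar> then \<bar>x\<bar> powr s else 0) \<partial>P)"

lemma abs_truncate_le: "T \<ge> 0 \<Longrightarrow> \<bar>truncate T x\<bar> \<le> T"
  by (simp add: truncate_def)

lemma borel_measurable_truncate [measurable]: "truncate T \<in> borel_measurable borel"
  unfolding truncate_def by measurable

locale centred_abs_moment = prob_space P for P :: "real measure" +
  fixes s :: real
  assumes sets_eq_borel [measurable_cong]: "sets P = sets borel"
    and integrable_id: "integrable P (\<lambda>x. x)"
    and mean_zero: "(\<integral>x. x \<partial>P) = 0"
    and integrable_abs_powr: "integrable P (\<lambda>x. \<bar>x\<bar> powr s)"
    and one_le_s: "1 \<le> s" and s_le_2: "s \<le> 2"
begin

abbreviation abs_moment :: real where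
  "abs_moment \<equiv> \<integral>x. \<bar>x\<bar> powr s \<partial>P"

lemma abs_moment_nonneg: "0 \<le> abs_moment"
  by (intro integral_nonneg_AE) auto

lemma integrable_tail:
  "integrable P (\<lambda>x. if T < \<bar>x\<bar> then \<bar>x\<bar> powr s else 0)"
  by (rule Bochner_Integration.integrable_bound[OF integrable_abs_powr]) auto

lemma tail_moment_nonneg: "0 \<le> tail_moment P s T"
  unfolding tail_moment_def by (intro integral_nonneg_AE) auto

lemma tail_moment_le_abs_moment: "tail_moment P s T \<le> abs_moment"
  unfolding tail_moment_def
  by (intro integral_mono integrable_tail integrable_abs_powr) auto

lemma tail_moment_tendsto_0: "((\<lambda>T. tail_moment P s T) \<longlongrightarrow> 0) at_top"
proof -
  have "((\<lambda>T. \<integral>x. (if T < \<bar>x\<bar> then \<bar>x\<bar> powr s else 0) \<partial>P) \<longlongrightarrow> (\<integral>x. 0 \<partial>P)) at_top"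
  proof (rule integral_dominated_convergence_at_top[OF _ _ integrable_abs_powr])
    show "AE x in P. ((\<lambda>T. if T < \<bar>x\<bar> then \<bar>x\<bar> powr s else 0) \<longlongrightarrow> 0) at_top"
    proof (intro AE_I2 tendsto_eventually)
      fix x :: real
      show "\<forall>\<^sub>F T in at_top. (if T < \<bar>x\<bar> then \<bar>x\<bar> powr s else 0) = 0"
        using eventually_ge_at_top[of "\<bar>x\<bar>"] by eventually_elim auto
    qed
  qed auto
  then show ?thesis unfolding tail_moment_def by simp
qed

lemma prob_abs_gt_le:
  assumes T: "T > 0"
  shows "measure P {x. T < \<bar>x\<bar>} \<le> T powr (-s) * tail_moment P s T"
proof -
  have A: "{x. T < \<bar>x\<bar>} \<in> sets P"
    unfolding sets_eq_borel by measurable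
  have "indicator {x. T < \<bar>x\<bar>} x \<le> T powr (-s) * (if T < \<bar>x\<bar> then \<bar>x\<bar> powr s else 0)" for x
    using T one_le_s powr_mono2[of s T "\<bar>x\<bar>"] by (auto simp: powr_minus field_simps)
  then have "(\<integral>x. indicator {x. T < \<bar>x\<bar>} x \<partial>P)
      \<le> (\<integral>x. T powr (-s) * (if T < \<bar>x\<bar> then \<bar>x\<bar> powr s else 0) \<partial>P)"
    using A by (intro integral_mono integrable_mult_right integrable_tail integrable_real_indicator)
      (auto simp: emeasure_eq_measure)
  then show ?thesis
    using A by (simp add: tail_moment_def)
qed

lemma integrable_truncate: "T \<ge> 0 \<Longrightarrow> integrable P (truncate T)"
  using abs_truncate_le by (intro integrable_const_bound) auto

lemma abs_truncated_mean_le: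
  assumes T: "T > 0"
  shows "\<bar>expectation (truncate T)\<bar> \<le> T powr (1 - s) * tail_moment P s T"
proof -
  have int_high: "integrable P (\<lambda>x. if T < \<bar>x\<bar> then x else 0)"
    by (rule Bochner_Integration.integrable_bound[OF integrable_id]) auto
  have "(\<lambda>x. x) = (\<lambda>x. truncate T x + (if T < \<bar>x\<bar> then x else 0))"
    by (auto simp: truncate_def)
  then have "expectation (truncate T) + (\<integral>x. (if T < \<bar>x\<bar> then x else 0) \<partial>P) = 0"
    using mean_zero int_high integrable_truncate[of T] T by simp
  moreover have "\<bar>if T < \<bar>x\<bar> then x else 0\<bar> \<le> T powr (1 - s) * (if T < \<bar>x\<bar> then \<bar>x\<bar> powr s else 0)" for x
  proof (cases "T < \<bar>x\<bar>")
    case True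
    then have "T powr (s - 1) \<le> \<bar>x\<bar> powr (s - 1)"
      using T one_le_s by (intro powr_mono2) auto
    then have "\<bar>x\<bar> * T powr (s - 1) \<le> \<bar>x\<bar> powr s"
      using True T by (simp add: mult_left_mono powr_diff field_simps)
    then show ?thesis
      using True T by (simp add: powr_diff field_simps)
  qed auto
  then have "(\<integral>x. \<bar>if T < \<bar>x\<bar> then x else 0\<bar> \<partial>P)
      \<le> (\<integral>x. T powr (1 - s) * (if T < \<bar>x\<bar> then \<bar>x\<bar> powr s else 0) \<partial>P)"
    using int_high by (intro integral_mono integrable_mult_right integrable_tail) auto
  then have "\<bar>\<integral>x. (if T < \<bar>x\<bar> then x else 0) \<partial>P\<bar> \<le> T powr (1 - s) * tail_moment P s T"
    unfolding tail_moment_def by (simp only: integral_mult_right_zero order_trans[OF integral_abs_bound])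
  ultimately show ?thesis by linarith
qed

lemma truncated_second_moment_le:
  assumes T: "T > 0"
  shows "expectation (\<lambda>x. (truncate T x)\<^sup>2) \<le> T powr (2 - s) * abs_moment"
proof -
  have "(truncate T x)\<^sup>2 \<le> T powr (2 - s) * \<bar>x\<bar> powr s" for x
  proof (cases "\<bar>x\<bar> \<le> T \<and> x \<noteq> 0")
    case True
    then have "\<bar>x\<bar> powr (2 - s) * \<bar>x\<bar> powr s \<le> T powr (2 - s) * \<bar>x\<bar> powr s"
      using s_le_2 by (intro mult_right_mono powr_mono2) auto
    moreover have "\<bar>x\<bar> powr (2 - s) * \<bar>x\<bar> powr s = x\<^sup>2"
      using True by (simp add: powr_add[symmetric])
    ultimately show ?thesis using True by (simp add: truncate_def)
  qed (auto simp: truncate_def)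
  moreover have "(truncate T x)\<^sup>2 \<le> T\<^sup>2" for x
    using T abs_truncate_le[of T x] by (simp add: abs_le_square_iff[symmetric])
  ultimately have "expectation (\<lambda>x. (truncate T x)\<^sup>2) \<le> (\<integral>x. T powr (2 - s) * \<bar>x\<bar> powr s \<partial>P)"
    by (intro integral_mono integrable_mult_right integrable_abs_powr integrable_const_bound[where B = "T\<^sup>2"]) auto
  then show ?thesis by simp
qed

lemma prob_centred_truncated_sum_ge_le:
  fixes n :: nat
  assumes T: "T > 0" and L: "L > 0"
  shows "measure (PiM {..<n} (\<lambda>_. P))
      {y \<in> space (PiM {..<n} (\<lambda>_. P)). L \<le> \<bar>\<Sum>j<n. u j * (truncate T (y j) - expectation (truncate T))\<bar>}
    \<le> (\<Sum>j<n. (u j)\<^sup>2) * (T powr (2 - s) * abs_moment) / L\<^sup>2"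
proof -
  define m where "m = expectation (truncate T)"
  have int_sq: "integrable P (\<lambda>x. (truncate T x)\<^sup>2)"
    using T abs_truncate_le[of T] by (intro integrable_const_bound[where B = "T\<^sup>2"]) (auto simp: abs_le_square_iff[symmetric])
  have "expectation (\<lambda>x. (truncate T x - m)\<^sup>2) = expectation (\<lambda>x. (truncate T x)\<^sup>2) - m\<^sup>2"
    unfolding m_def using T by (intro variance_eq integrable_truncate int_sq) auto
  also have "\<dots> \<le> T powr (2 - s) * abs_moment"
    using truncated_second_moment_le[OF T] zero_le_power2[of m] by linarith
  finally have var: "expectation (\<lambda>x. (truncate T x - m)\<^sup>2) \<le> T powr (2 - s) * abs_moment" .
  have "\<bar>truncate T x - m\<bar> \<le> T + \<bar>m\<bar>" for x
    using T abs_truncate_le[of T x] by linarith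
  moreover have "expectation (\<lambda>x. truncate T x - m) = 0"
    using T integrable_truncate[of T] by (simp add: m_def prob_space)
  ultimately show ?thesis
    unfolding m_def[symmetric] using L var
    by (intro Chebyshev_PiM_weighted_sum[OF prob_space_axioms]) auto
qed

lemma abs_truncated_mean_sum_le:
  assumes T: "T > 0" and \<beta>: "\<beta> > 0" and R: "c * real n \<le> R" and u: "(\<Sum>j<n. (u j)\<^sup>2) \<le> R"
    and small_mean: "T powr (1 - s) * tail_moment P s T \<le> \<beta> * sqrt c / 2"
  shows "\<bar>expectation (truncate T) * (\<Sum>j<n. u j)\<bar> \<le> \<beta> * R / 2"
proof -
  have "0 \<le> (\<Sum>j<n. (u j)\<^sup>2)"
    by (simp add: sum_nonneg)
  with u have R_nonneg: "R \<ge> 0"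
    by linarith
  have "(\<Sum>j<n. u j)\<^sup>2 \<le> real n * R"
    using Cauchy_Schwarz_ineq_sum[of u "\<lambda>_. 1" "{..<n}"] mult_left_mono[OF u, of "real n"]
    by (simp add: mult.commute)
  then have "\<bar>\<Sum>j<n. u j\<bar> \<le> sqrt (real n * R)"
    using real_sqrt_le_mono by fastforce
  then have "\<bar>expectation (truncate T) * (\<Sum>j<n. u j)\<bar> \<le> \<beta> * sqrt c / 2 * sqrt (real n * R)"
    unfolding abs_mult using abs_truncated_mean_le[OF T] small_mean \<beta>
    by (intro mult_mono) auto
  also have "\<dots> = \<beta> / 2 * sqrt ((c * real n) * R)"
    by (simp add: real_sqrt_mult)
  also have "\<dots> \<le> \<beta> / 2 * sqrt (R * R)"
    using R R_nonneg \<beta> by (intro mult_left_mono real_sqrt_le_mono mult_right_mono) auto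
  finally show ?thesis
    using R_nonneg by simp
qed

lemma weighted_sum_tail_le:
  assumes T: "T > 0" and \<beta>: "\<beta> > 0" and c: "c > 0" and n: "n > 0"
    and R: "c * real n \<le> R" and u: "(\<Sum>j<n. (u j)\<^sup>2) \<le> R"
    and small_mean: "T powr (1 - s) * tail_moment P s T \<le> \<beta> * sqrt c / 2"
  shows "measure (PiM {..<n} (\<lambda>_. P)) {y \<in> space (PiM {..<n} (\<lambda>_. P)). \<beta> * R < \<bar>\<Sum>j<n. u j * y j\<bar>}
    \<le> real n * T powr (-s) * tail_moment P s T + 4 * T powr (2 - s) * abs_moment / (\<beta>\<^sup>2 * c * real n)"
proof -
  let ?Q = "PiM {..<n} (\<lambda>_. P)"
  interpret Q: prob_space ?Q
    by (simp add: prob_space_PiM prob_space_axioms)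
  define m where "m = expectation (truncate T)"
  have cn: "c * real n > 0"
    using c n by simp
  then have R_pos: "R > 0"
    using R by linarith
  have small_shift: "\<bar>m * (\<Sum>j<n. u j)\<bar> \<le> \<beta> * R / 2"
    unfolding m_def by (rule abs_truncated_mean_sum_le[OF T \<beta> R u small_mean])
  define Big where "Big = {y \<in> space ?Q. \<exists>j\<in>{..<n}. y j \<in> {x. T < \<bar>x\<bar>}}"
  define Dev where "Dev = {y \<in> space ?Q. \<beta> * R / 2 \<le> \<bar>\<Sum>j<n. u j * (truncate T (y j) - m)\<bar>}"
  have [measurable]: "Big \<in> sets ?Q" "Dev \<in> sets ?Q"
    unfolding Big_def Dev_def by measurable
  have "(\<Sum>j<n. u j * y j) = (\<Sum>j<n. u j * (truncate T (y j) - m)) + m * (\<Sum>j<n. u j)"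
    if "\<forall>j<n. \<bar>y j\<bar> \<le> T" for y
    using that by (simp add: truncate_def algebra_simps sum_subtractf sum_distrib_left)
  then have "{y \<in> space ?Q. \<beta> * R < \<bar>\<Sum>j<n. u j * y j\<bar>} \<subseteq> Big \<union> Dev"
    using small_shift by (force simp: Big_def Dev_def not_less)
  then have "measure ?Q {y \<in> space ?Q. \<beta> * R < \<bar>\<Sum>j<n. u j * y j\<bar>} \<le> measure ?Q (Big \<union> Dev)"
    by (intro Q.finite_measure_mono) auto
  also have "\<dots> \<le> measure ?Q Big + measure ?Q Dev"
    by (intro measure_Un_le) auto
  also have "measure ?Q Big \<le> real n * (T powr (-s) * tail_moment P s T)"
    using measure_PiM_ex_component_le[OF prob_space_axioms, of "{..<n}" "{x. T < \<bar>x\<bar>}"]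
      prob_abs_gt_le[OF T] unfolding Big_def
    by (simp add: sets_eq_borel) (meson mult_left_mono of_nat_0_le_iff order_trans)
  also have "measure ?Q Dev \<le> (\<Sum>j<n. (u j)\<^sup>2) * (T powr (2 - s) * abs_moment) / (\<beta> * R / 2)\<^sup>2"
    unfolding Dev_def m_def using T \<beta> R_pos by (intro prob_centred_truncated_sum_ge_le) auto
  also have "\<dots> \<le> R * (T powr (2 - s) * abs_moment) / (\<beta> * R / 2)\<^sup>2"
    using u abs_moment_nonneg by (intro divide_right_mono mult_right_mono) auto
  also have "\<dots> = 4 * T powr (2 - s) * abs_moment / (\<beta>\<^sup>2 * R)"
    using R_pos by (simp add: power2_eq_square field_simps)
  also have "\<dots> \<le> 4 * T powr (2 - s) * abs_moment / (\<beta>\<^sup>2 * (c * real n))"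
    using R cn \<beta> abs_moment_nonneg by (intro divide_left_mono mult_left_mono) auto
  finally show ?thesis
    by (simp add: mult_ac)
qed

lemma weighted_sum_tail_le_scaled:
  assumes \<eta>: "\<eta> > 0" and \<beta>: "\<beta> > 0" and c: "c > 0" and n: "n > 0"
    and R: "c * real n \<le> R" and u: "(\<Sum>j<n. (u j)\<^sup>2) \<le> R"
    and \<kappa>: "0 < \<kappa>" "\<kappa> \<le> (\<beta> * real n) powr s / real n"
    and small_tail: "\<eta> * tail_moment P s (\<eta> * \<beta> * real n) \<le> sqrt c / 2 * \<eta> powr s * \<kappa>"
  shows "measure (PiM {..<n} (\<lambda>_. P)) {y \<in> space (PiM {..<n} (\<lambda>_. P)). \<beta> * R < \<bar>\<Sum>j<n. u j * y j\<bar>}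
    \<le> (tail_moment P s (\<eta> * \<beta> * real n) + 4 * \<eta>\<^sup>2 * abs_moment / c) / (\<eta> powr s * \<kappa>)"
proof -
  define T where "T = \<eta> * \<beta> * real n"
  define \<tau> where "\<tau> = tail_moment P s T"
  have T: "T > 0" and \<tau>: "\<tau> \<ge> 0"
    using \<eta> \<beta> n by (simp_all add: T_def \<tau>_def tail_moment_nonneg)
  have "\<kappa> * real n \<le> (\<beta> * real n) powr s"
    using \<kappa> n by (simp add: field_simps)
  then have "\<eta> powr s * \<kappa> * real n \<le> \<eta> powr s * (\<beta> * real n) powr s"
    by (simp add: mult.assoc mult_left_mono)
  also have "\<dots> = T powr s"
    using \<eta> \<beta> by (simp add: T_def powr_mult mult.assoc)
  finally have Ts: "\<eta> powr s * \<kappa> * real n \<le> T powr s" .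
  have pos: "0 < \<eta> powr s * \<kappa> * real n"
    using \<eta> \<kappa> n by simp
  have powr_eqs: "T powr (-s) = 1 / T powr s" "T powr (1 - s) = T / T powr s"
      "T powr (2 - s) = T\<^sup>2 / T powr s"
    using T by (simp_all add: powr_minus_divide powr_diff powr_numeral)
  have "T powr (1 - s) * \<tau> = \<beta> * real n * (\<eta> * \<tau>) / T powr s"
    unfolding powr_eqs by (simp add: T_def mult_ac)
  also have "\<dots> \<le> \<beta> * real n * (sqrt c / 2 * \<eta> powr s * \<kappa>) / (\<eta> powr s * \<kappa> * real n)"
    using small_tail Ts pos \<beta> \<tau> \<eta> \<kappa> c by (intro frac_le mult_left_mono) (auto simp: \<tau>_def T_def)
  also have "\<dots> = \<beta> * sqrt c / 2"
    using pos \<eta> \<kappa> n by (simp add: field_simps)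
  finally have "measure (PiM {..<n} (\<lambda>_. P)) {y \<in> space (PiM {..<n} (\<lambda>_. P)). \<beta> * R < \<bar>\<Sum>j<n. u j * y j\<bar>}
      \<le> real n * T powr (-s) * \<tau> + 4 * T powr (2 - s) * abs_moment / (\<beta>\<^sup>2 * c * real n)"
    unfolding \<tau>_def using T \<beta> c n R u by (intro weighted_sum_tail_le) auto
  also have "\<dots> = (real n * \<tau> + 4 * \<eta>\<^sup>2 * abs_moment / c * real n) / T powr s"
  proof -
    have "T\<^sup>2 = \<eta>\<^sup>2 * \<beta>\<^sup>2 * (real n)\<^sup>2" and "T powr s > 0"
      using \<eta> \<beta> n by (simp_all add: T_def power_mult_distrib)
    then show ?thesis
      using \<beta> n c unfolding powr_eqs by (simp add: power2_eq_square field_simps)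
  qed
  also have "\<dots> \<le> (real n * \<tau> + 4 * \<eta>\<^sup>2 * abs_moment / c * real n) / (\<eta> powr s * \<kappa> * real n)"
    using Ts pos \<tau> abs_moment_nonneg c mult_pos_pos[OF order_less_le_trans[OF pos Ts] pos]
    by (intro divide_left_mono) auto
  also have "\<dots> = (\<tau> + 4 * \<eta>\<^sup>2 * abs_moment / c) / (\<eta> powr s * \<kappa>)"
    using n c \<kappa> \<eta> by (simp add: field_simps)
  finally show ?thesis
    by (simp add: \<tau>_def T_def)
qed

lemma eventually_weighted_sum_tail_le:
  fixes \<beta> :: "nat \<Rightarrow> real"
  assumes c: "c > 0" and \<eta>: "\<eta> > 0" and \<kappa>: "\<kappa> > 0"
    and pos: "\<forall>\<^sub>F n in sequentially. 0 < \<beta> n"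
    and lower: "\<forall>\<^sub>F n in sequentially. \<kappa> \<le> (\<beta> n * real n) powr s / real n"
    and small_tail: "\<forall>\<^sub>F n in sequentially.
      \<eta> * tail_moment P s (\<eta> * \<beta> n * real n) \<le> sqrt c / 2 * \<eta> powr s * \<kappa>"
    and small_bound: "\<forall>\<^sub>F n in sequentially.
      (tail_moment P s (\<eta> * \<beta> n * real n) + 4 * \<eta>\<^sup>2 * abs_moment / c) / (\<eta> powr s * \<kappa>) \<le> \<epsilon>"
  shows "\<forall>\<^sub>F n in sequentially. \<forall>u R. c * real n \<le> R \<longrightarrow> (\<Sum>j<n. (u j)\<^sup>2) \<le> R \<longrightarrow>
           measure (PiM {..<n} (\<lambda>_. P)) {y \<in> space (PiM {..<n} (\<lambda>_. P)). \<beta> n * R < \<bar>\<Sum>j<n. u j * y j\<bar>} \<le> \<epsilon>"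
  using pos lower small_tail small_bound eventually_gt_at_top[of 0]
proof eventually_elim
  case (elim n)
  show ?case
    using weighted_sum_tail_le_scaled[OF \<eta> elim(1) c elim(5) _ _ \<kappa> elim(2) elim(3)] elim(4)
    by (meson order_trans)
qed

lemma eventually_weighted_sum_tail_le_of_growth:
  fixes \<beta> :: "nat \<Rightarrow> real"
  assumes c: "c > 0" and \<epsilon>: "\<epsilon> > 0" and pos: "\<forall>\<^sub>F n in sequentially. 0 < \<beta> n"
    and growth: "filterlim (\<lambda>n. (\<beta> n * real n) powr s / real n) at_top sequentially"
  shows "\<forall>\<^sub>F n in sequentially. \<forall>u R. c * real n \<le> R \<longrightarrow> (\<Sum>j<n. (u j)\<^sup>2) \<le> R \<longrightarrow>
           measure (PiM {..<n} (\<lambda>_. P)) {y \<in> space (PiM {..<n} (\<lambda>_. P)). \<beta> n * R < \<bar>\<Sum>j<n. u j * y j\<bar>} \<le> \<epsilon>"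
proof (rule eventually_weighted_sum_tail_le[OF c _ _ pos, where \<eta> = 1])
  define K where "K = max (2 * abs_moment / sqrt c) ((abs_moment + 4 * abs_moment / c) / \<epsilon>) + 1"
  show K: "K > 0"
    unfolding K_def using abs_moment_nonneg c by (smt (verit) divide_nonneg_pos max.cobounded1 real_sqrt_gt_zero)
  show "\<forall>\<^sub>F n in sequentially. K \<le> (\<beta> n * real n) powr s / real n"
    using growth by (simp add: filterlim_at_top)
  have "tail_moment P s T \<le> sqrt c / 2 * (2 * abs_moment / sqrt c)" for T
    using tail_moment_le_abs_moment[of T] c by simp
  also have "\<dots> \<le> sqrt c / 2 * K"
    using c by (intro mult_left_mono) (auto simp: K_def)
  finally show "\<forall>\<^sub>F n in sequentially. 1 * tail_moment P s (1 * \<beta> n * real n) \<le> sqrt c / 2 * 1 powr s * K"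
    by simp
  have "(abs_moment + 4 * abs_moment / c) / \<epsilon> \<le> K"
    by (simp add: K_def)
  then have "(abs_moment + 4 * abs_moment / c) / K \<le> \<epsilon>"
    using K \<epsilon> by (simp add: pos_divide_le_eq mult.commute)
  moreover have "(tail_moment P s T + 4 * abs_moment / c) / K \<le> (abs_moment + 4 * abs_moment / c) / K" for T
    using tail_moment_le_abs_moment[of T] K by (intro divide_right_mono) auto
  ultimately have "(tail_moment P s T + 4 * abs_moment / c) / K \<le> \<epsilon>" for T
    by (meson order_trans)
  then show "\<forall>\<^sub>F n in sequentially.
      (tail_moment P s (1 * \<beta> n * real n) + 4 * 1\<^sup>2 * abs_moment / c) / (1 powr s * K) \<le> \<epsilon>"
    by simp
qed simp

lemma eventually_weighted_sum_tail_le_of_lower_bound: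
  fixes \<beta> :: "nat \<Rightarrow> real"
  assumes s: "s < 2" and c: "c > 0" and \<epsilon>: "\<epsilon> > 0" and \<kappa>: "\<kappa> > 0"
    and pos: "\<forall>\<^sub>F n in sequentially. 0 < \<beta> n"
    and lower: "\<forall>\<^sub>F n in sequentially. \<kappa> \<le> (\<beta> n * real n) powr s / real n"
  shows "\<forall>\<^sub>F n in sequentially. \<forall>u R. c * real n \<le> R \<longrightarrow> (\<Sum>j<n. (u j)\<^sup>2) \<le> R \<longrightarrow>
           measure (PiM {..<n} (\<lambda>_. P)) {y \<in> space (PiM {..<n} (\<lambda>_. P)). \<beta> n * R < \<bar>\<Sum>j<n. u j * y j\<bar>} \<le> \<epsilon>"
proof -
  obtain \<eta> where \<eta>: "\<eta> > 0" and "4 * abs_moment / (c * \<kappa>) * (\<eta>\<^sup>2 / \<eta> powr s) \<le> \<epsilon> / 2"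
    using exists_pos_square_div_powr_le[OF s, of "4 * abs_moment / (c * \<kappa>)" "\<epsilon> / 2"]
      abs_moment_nonneg c \<kappa> \<epsilon> by auto
  then have variance_term: "4 * \<eta>\<^sup>2 * abs_moment / c / (\<eta> powr s * \<kappa>) \<le> \<epsilon> / 2"
    by (simp add: field_simps)
  have "\<forall>\<^sub>F n in sequentially. 0 < \<beta> n * real n"
    using pos eventually_gt_at_top[of 0] by eventually_elim simp
  moreover have "\<forall>\<^sub>F n in sequentially. \<kappa> * real n \<le> (\<beta> n * real n) powr s"
    using lower eventually_gt_at_top[of 0] by eventually_elim (simp add: field_simps)
  ultimately have "filterlim (\<lambda>n. \<beta> n * real n) at_top sequentially"
    using one_le_s \<kappa> by (intro filterlim_at_top_of_powr_ge_linear) auto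
  then have "filterlim (\<lambda>n. \<eta> * \<beta> n * real n) at_top sequentially"
    using \<eta> by (simp add: mult.assoc filterlim_tendsto_pos_mult_at_top[OF tendsto_const])
  then have tail_lim: "((\<lambda>n. tail_moment P s (\<eta> * \<beta> n * real n)) \<longlongrightarrow> 0) sequentially"
    by (rule filterlim_compose[OF tail_moment_tendsto_0])
  show ?thesis
  proof (rule eventually_weighted_sum_tail_le[OF c \<eta> \<kappa> pos lower])
    have "sqrt c / 2 * \<eta> powr s * \<kappa> / \<eta> > 0"
      using c \<eta> \<kappa> by simp
    from order_tendstoD(2)[OF tail_lim this]
    show "\<forall>\<^sub>F n in sequentially. \<eta> * tail_moment P s (\<eta> * \<beta> n * real n) \<le> sqrt c / 2 * \<eta> powr s * \<kappa>"
      by eventually_elim (use \<eta> in \<open>simp add: field_simps\<close>)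
    have "\<epsilon> / 2 * (\<eta> powr s * \<kappa>) > 0"
      using \<epsilon> \<eta> \<kappa> by simp
    from order_tendstoD(2)[OF tail_lim this]
    show "\<forall>\<^sub>F n in sequentially.
        (tail_moment P s (\<eta> * \<beta> n * real n) + 4 * \<eta>\<^sup>2 * abs_moment / c) / (\<eta> powr s * \<kappa>) \<le> \<epsilon>"
    proof eventually_elim
      case (elim n)
      then have "tail_moment P s (\<eta> * \<beta> n * real n) / (\<eta> powr s * \<kappa>) \<le> \<epsilon> / 2"
        using \<eta> \<kappa> by (simp add: divide_le_eq)
      with variance_term show ?case
        by (simp only: add_divide_distrib)
    qed
  qed
qed

end

lemma Dclass_centred_abs_moment:
  assumes "P \<in> Dclass s" and "1 \<le> s" and "s \<le> 2"
  shows "centred_abs_moment P s"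
proof -
  have sets: "sets P = sets borel" and moment: "(\<integral>\<^sup>+ x. ennreal (\<bar>x\<bar> powr s) \<partial>P) \<le> 2"
    using assms(1) by (auto simp: Dclass_def)
  have "integrable P (\<lambda>x. \<bar>x\<bar> powr s)"
    using sets moment by (intro integrableI_bounded) (auto simp: measurable_cong_sets[OF sets refl] order_le_less_trans)
  with assms show ?thesis
    by (auto simp: centred_abs_moment_def centred_abs_moment_axioms_def Dclass_def)
qed

section \<open>Nondegeneracy of the w coordinates\<close>

lemma Dclass_not_AE_zero:
  assumes "P \<in> Dclass s"
  shows "\<not> (AE x in P. x = 0)"
proof
  assume "AE x in P. x = 0"
  then have "(\<integral>\<^sup>+ x. ennreal (\<bar>x\<bar> powr s) \<partial>P) = (\<integral>\<^sup>+ x. 0 \<partial>P)"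
    by (intro nn_integral_cong_AE) auto
  with assms show False
    by (simp add: Dclass_def)
qed

lemma exists_prob_abs_ge_pos:
  fixes P :: "real measure"
  assumes P: "prob_space P" and sets_P: "sets P = sets borel" and nonzero: "\<not> (AE x in P. x = 0)"
  shows "\<exists>a>0. measure P {x. a \<le> \<bar>x\<bar>} > 0"
proof (rule ccontr)
  interpret prob_space P by fact
  assume "\<not> ?thesis"
  then have no_mass: "\<not> measure P {x. 1 / real (Suc k) \<le> \<bar>x\<bar>} > 0" for k
    by simp
  have "measure P {x. 1 / real (Suc k) \<le> \<bar>x\<bar>} = 0" for k
    using no_mass[of k] measure_nonneg[of P "{x. 1 / real (Suc k) \<le> \<bar>x\<bar>}"] by linarith
  moreover have "{x. 1 / real (Suc k) \<le> \<bar>x\<bar>} \<in> sets P" for k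
    unfolding sets_P by measurable
  ultimately have "{x. 1 / real (Suc k) \<le> \<bar>x\<bar>} \<in> null_sets P" for k
    by (metis emeasure_eq_measure ennreal_0 null_setsI)
  then have "(\<Union>k. {x. 1 / real (Suc k) \<le> \<bar>x\<bar>}) \<in> null_sets P"
    by (rule null_sets_UN)
  moreover have "{x \<in> space P. x \<noteq> 0} \<subseteq> (\<Union>k. {x. 1 / real (Suc k) \<le> \<bar>x\<bar>})"
  proof safe
    fix x :: real
    assume "x \<noteq> 0"
    then obtain k where "inverse (real (Suc k)) < \<bar>x\<bar>"
      using reals_Archimedean[of "\<bar>x\<bar>"] by auto
    then show "x \<in> (\<Union>k. {x. 1 / real (Suc k) \<le> \<bar>x\<bar>})"
      by (intro UN_I[of k]) (auto simp: inverse_eq_divide)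
  qed
  ultimately have "AE x in P. x = 0"
    by (rule AE_I')
  with nonzero show False ..
qed

lemma prob_count_lt_half_mean_le:
  assumes P: "prob_space P" and A [measurable]: "A \<in> sets P" and p: "measure P A = p" "p > 0"
    and n: "n > 0"
  shows "measure (PiM {..<n} (\<lambda>_. P)) {w \<in> space (PiM {..<n} (\<lambda>_. P)). (\<Sum>i<n. indicator A (w i)) < real n * p / 2}
    \<le> 4 / p\<^sup>2 / real n"
proof -
  interpret prob_space P by fact
  let ?Q = "PiM {..<n} (\<lambda>_. P)"
  interpret Q: prob_space ?Q
    by (simp add: P prob_space_PiM)
  define g where "g = (\<lambda>x. indicator A x - p)"
  have g [measurable]: "g \<in> borel_measurable P"
    unfolding g_def by measurable
  have g_bnd: "\<bar>g x\<bar> \<le> 1" for x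
    using p prob_le_1[of A] by (auto simp: g_def indicator_def)
  have "integral\<^sup>L P g = integral\<^sup>L P (indicator A) - integral\<^sup>L P (\<lambda>_. p)"
    unfolding g_def using A
    by (intro Bochner_Integration.integral_diff integrable_real_indicator) (auto simp: emeasure_eq_measure)
  then have mean_g: "integral\<^sup>L P g = 0"
    using A p by (simp add: measure_def emeasure_space_1)
  have "(g x)\<^sup>2 \<le> 1" for x
    using power_mono[OF g_bnd abs_ge_zero, of x 2] by simp
  then have "integral\<^sup>L P (\<lambda>x. (g x)\<^sup>2) \<le> integral\<^sup>L P (\<lambda>_. 1)"
    by (intro integral_mono integrable_const_bound[where B = 1]) auto
  then have var_g: "integral\<^sup>L P (\<lambda>x. (g x)\<^sup>2) \<le> 1"
    by (simp add: measure_def emeasure_space_1)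
  have "(\<Sum>j<n. 1 * g (w j)) = (\<Sum>i<n. indicator A (w i)) - real n * p" for w
    by (simp add: g_def sum_subtractf)
  then have "{w \<in> space ?Q. (\<Sum>i<n. indicator A (w i)) < real n * p / 2}
      \<subseteq> {w \<in> space ?Q. real n * p / 2 \<le> \<bar>\<Sum>j\<in>{..<n}. 1 * g (w j)\<bar>}"
    by (auto simp: abs_if mult.commute)
  then have "measure ?Q {w \<in> space ?Q. (\<Sum>i<n. indicator A (w i)) < real n * p / 2}
      \<le> measure ?Q {w \<in> space ?Q. real n * p / 2 \<le> \<bar>\<Sum>j\<in>{..<n}. 1 * g (w j)\<bar>}"
    by (intro Q.finite_measure_mono) measurable
  also have "\<dots> \<le> (\<Sum>j\<in>{..<n}. 1\<^sup>2) * 1 / (real n * p / 2)\<^sup>2"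
    using n p by (intro Chebyshev_PiM_weighted_sum[OF P _ g g_bnd mean_g var_g]) auto
  also have "\<dots> = 4 / p\<^sup>2 / real n"
    using n p by (simp add: power2_eq_square field_simps)
  finally show ?thesis .
qed

lemma sum_squares_lower_bound:
  fixes P :: "real measure"
  assumes P: "prob_space P" and sets_P: "sets P = sets borel" and nonzero: "\<not> (AE x in P. x = 0)"
  shows "\<exists>c>0. (\<lambda>n. measure (PiM {..<n} (\<lambda>_. P))
      {w \<in> space (PiM {..<n} (\<lambda>_. P)). (\<Sum>i<n. (w i)\<^sup>2) < c * real n}) \<longlonglongrightarrow> 0"
proof -
  interpret prob_space P by fact
  obtain a where a: "a > 0" and p: "measure P {x. a \<le> \<bar>x\<bar>} > 0"
    using exists_prob_abs_ge_pos[OF P sets_P nonzero] by blast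
  define A where "A = {x::real. a \<le> \<bar>x\<bar>}"
  define c where "c = a\<^sup>2 * measure P A / 2"
  have A [measurable]: "A \<in> sets P"
    unfolding A_def sets_P by measurable
  have "a\<^sup>2 * indicator A x \<le> x\<^sup>2" for x
    using a by (auto simp: A_def indicator_def abs_le_square_iff[symmetric])
  then have count_le: "a\<^sup>2 * (\<Sum>i<n. indicator A (w i)) \<le> (\<Sum>i<n. (w i)\<^sup>2)" for n w
    unfolding sum_distrib_left by (intro sum_mono)
  have "(\<Sum>i<n. indicator A (w i)) < real n * measure P A / 2" if "(\<Sum>i<n. (w i)\<^sup>2) < c * real n" for n w
  proof -
    have "a\<^sup>2 * (\<Sum>i<n. indicator A (w i)) < a\<^sup>2 * (real n * measure P A / 2)"
      using count_le[of w n] that by (simp add: c_def mult_ac)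
    then show ?thesis
      using a by simp
  qed
  then have subset: "{w \<in> space (PiM {..<n} (\<lambda>_. P)). (\<Sum>i<n. (w i)\<^sup>2) < c * real n}
      \<subseteq> {w \<in> space (PiM {..<n} (\<lambda>_. P)). (\<Sum>i<n. indicator A (w i)) < real n * measure P A / 2}" for n
    by auto
  have "measure (PiM {..<n} (\<lambda>_. P)) {w \<in> space (PiM {..<n} (\<lambda>_. P)). (\<Sum>i<n. (w i)\<^sup>2) < c * real n}
      \<le> 4 / (measure P A)\<^sup>2 / real n" if n: "n > 0" for n
  proof -
    interpret Q: prob_space "PiM {..<n} (\<lambda>_. P)"
      by (simp add: P prob_space_PiM)
    have "measure (PiM {..<n} (\<lambda>_. P)) {w \<in> space (PiM {..<n} (\<lambda>_. P)). (\<Sum>i<n. (w i)\<^sup>2) < c * real n}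
      \<le> measure (PiM {..<n} (\<lambda>_. P)) {w \<in> space (PiM {..<n} (\<lambda>_. P)). (\<Sum>i<n. indicator A (w i)) < real n * measure P A / 2}"
      by (intro Q.finite_measure_mono[OF subset]) measurable
    also have "\<dots> \<le> 4 / (measure P A)\<^sup>2 / real n"
      using p A n by (intro prob_count_lt_half_mean_le[OF P]) (auto simp: A_def)
    finally show ?thesis .
  qed
  then have "(\<lambda>n. measure (PiM {..<n} (\<lambda>_. P))
      {w \<in> space (PiM {..<n} (\<lambda>_. P)). (\<Sum>i<n. (w i)\<^sup>2) < c * real n}) \<longlonglongrightarrow> 0"
    by (intro tendsto_sandwich[OF _ _ tendsto_const lim_const_over_n[of "4 / (measure P A)\<^sup>2"]])
      (auto intro: eventually_mono[OF eventually_gt_at_top[of 0]])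
  moreover have "c > 0"
    using a p by (simp add: c_def A_def)
  ultimately show ?thesis
    by blast
qed

section \<open>The quadratic form\<close>

lemma vnorm_eq_L2_set: "vnorm n x = L2_set x {..<n}"
  by (simp add: vnorm_def L2_set_def)

lemma inner_mvec_transpose:
  "(\<Sum>i<n. w i * mvec n A y i) = (\<Sum>j<n. mvec n (\<lambda>i j. A j i) w j * y j)"
proof -
  have "(\<Sum>i<n. w i * mvec n A y i) = (\<Sum>i<n. \<Sum>j<n. A i j * w i * y j)"
    by (simp add: mvec_def sum_distrib_left mult_ac)
  also have "\<dots> = (\<Sum>j<n. \<Sum>i<n. A i j * w i * y j)"
    by (rule sum.swap)
  also have "\<dots> = (\<Sum>j<n. mvec n (\<lambda>i j. A j i) w j * y j)"
    by (simp add: mvec_def sum_distrib_right)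
  finally show ?thesis .
qed

lemma opnorm_le1_transpose:
  assumes A: "opnorm_le1 n A"
  shows "opnorm_le1 n (\<lambda>i j. A j i)"
  unfolding opnorm_le1_def
proof
  fix x
  define u where "u = mvec n (\<lambda>i j. A j i) x"
  have "(vnorm n u)\<^sup>2 = (\<Sum>j<n. u j * u j)"
    by (simp add: vnorm_def sum_nonneg power2_eq_square)
  also have "\<dots> = (\<Sum>i<n. x i * mvec n A u i)"
    by (simp add: inner_mvec_transpose u_def)
  also have "\<dots> \<le> vnorm n x * vnorm n (mvec n A u)"
    unfolding vnorm_eq_L2_set
    by (rule order_trans[OF sum_mono L2_set_mult_ineq]) (simp add: abs_mult[symmetric])
  also have "\<dots> \<le> vnorm n x * vnorm n u"
    using A by (intro mult_left_mono) (auto simp: opnorm_le1_def vnorm_def sum_nonneg)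
  finally have le: "vnorm n u * vnorm n u \<le> vnorm n x * vnorm n u"
    by (simp add: power2_eq_square)
  have "0 \<le> vnorm n u" "0 \<le> vnorm n x"
    by (simp_all add: vnorm_eq_L2_set L2_set_nonneg)
  with le show "vnorm n u \<le> vnorm n x"
    by (cases "vnorm n u = 0") (auto intro: mult_right_le_imp_le)
qed

lemma ratio_event_imp_weighted_sum_gt:
  assumes event: "ratio_event n A b \<delta> w y" and \<delta>: "\<delta> > 0" and b: "b \<noteq> 0" and w: "vnorm n w \<noteq> 0"
  shows "\<delta> * \<bar>b\<bar> * (\<Sum>i<n. (w i)\<^sup>2) < \<bar>\<Sum>j<n. mvec n (\<lambda>i j. A j i) w j * y j\<bar>"
proof -
  define num where "num = \<bar>\<Sum>j<n. mvec n (\<lambda>i j. A j i) w j * y j\<bar>"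
  define R where "R = (\<Sum>i<n. (w i)\<^sup>2)"
  have "R \<ge> 0" "R \<noteq> 0"
    using w by (auto simp: R_def vnorm_def sum_nonneg)
  then have R: "R > 0" by simp
  have "(vnorm n w)\<^sup>2 = R"
    using R by (simp add: R_def vnorm_def)
  then have ratio: "\<delta> < num / (b * R)"
    using event b R by (simp add: ratio_event_def Let_def inner_mvec_transpose num_def)
  have "b * R > 0"
  proof (rule ccontr)
    assume "\<not> b * R > 0"
    then have "num / (b * R) \<le> 0"
      by (simp add: num_def divide_nonneg_nonpos)
    with ratio \<delta> show False by simp
  qed
  with R have "b > 0"
    by (simp add: zero_less_mult_iff)
  moreover have "\<delta> * (b * R) < num"
    using ratio \<open>b * R > 0\<close> by (simp add: pos_less_divide_eq)
  ultimately have "\<delta> * \<bar>b\<bar> * R < num"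
    by (simp add: mult.assoc)
  then show ?thesis
    unfolding num_def R_def .
qed

lemma sets_ratio_event:
  assumes [measurable_cong]: "sets Pw = sets borel" "sets Pxi = sets borel"
  shows "{p \<in> space (PiM {..<n} (\<lambda>_. Pw) \<Otimes>\<^sub>M PiM {..<n} (\<lambda>_. Pxi)). ratio_event n A b \<delta> (fst p) (snd p)}
    \<in> sets (PiM {..<n} (\<lambda>_. Pw) \<Otimes>\<^sub>M PiM {..<n} (\<lambda>_. Pxi))"
  unfolding ratio_event_def Let_def vnorm_def mvec_def by measurable

lemma prob_ratio_event_le:
  assumes Pw: "prob_space Pw" and sets_Pw [measurable_cong]: "sets Pw = sets borel"
    and Pxi: "prob_space Pxi" and sets_Pxi [measurable_cong]: "sets Pxi = sets borel"
    and A: "opnorm_le1 n A" and b: "b \<noteq> 0" and \<delta>: "\<delta> > 0" and cn: "c * real n > 0" and G: "G \<ge> 0"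
    and tail: "\<And>u R. c * real n \<le> R \<Longrightarrow> (\<Sum>j<n. (u j)\<^sup>2) \<le> R \<Longrightarrow>
      measure (PiM {..<n} (\<lambda>_. Pxi)) {y \<in> space (PiM {..<n} (\<lambda>_. Pxi)). \<delta> * \<bar>b\<bar> * R < \<bar>\<Sum>j<n. u j * y j\<bar>} \<le> G"
  shows "measure (PiM {..<n} (\<lambda>_. Pw) \<Otimes>\<^sub>M PiM {..<n} (\<lambda>_. Pxi))
      {p \<in> space (PiM {..<n} (\<lambda>_. Pw) \<Otimes>\<^sub>M PiM {..<n} (\<lambda>_. Pxi)). ratio_event n A b \<delta> (fst p) (snd p)}
    \<le> measure (PiM {..<n} (\<lambda>_. Pw)) {w \<in> space (PiM {..<n} (\<lambda>_. Pw)). (\<Sum>i<n. (w i)\<^sup>2) < c * real n} + G"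
proof (rule measure_pair_le_of_sections)
  let ?X = "PiM {..<n} (\<lambda>_. Pxi)"
  interpret X: prob_space ?X
    using Pxi by (simp add: prob_space_PiM)
  fix w
  assume "w \<in> space (PiM {..<n} (\<lambda>_. Pw)) - {w \<in> space (PiM {..<n} (\<lambda>_. Pw)). (\<Sum>i<n. (w i)\<^sup>2) < c * real n}"
  then have R: "c * real n \<le> (\<Sum>i<n. (w i)\<^sup>2)"
    by auto
  then have "vnorm n w \<noteq> 0"
    using cn by (auto simp: vnorm_def)
  then have "Pair w -` {p \<in> space (PiM {..<n} (\<lambda>_. Pw) \<Otimes>\<^sub>M ?X). ratio_event n A b \<delta> (fst p) (snd p)}
      \<subseteq> {y \<in> space ?X. \<delta> * \<bar>b\<bar> * (\<Sum>i<n. (w i)\<^sup>2) < \<bar>\<Sum>j<n. mvec n (\<lambda>i j. A j i) w j * y j\<bar>}"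
    using ratio_event_imp_weighted_sum_gt[OF _ \<delta> b] by (auto simp: space_pair_measure)
  then have "measure ?X (Pair w -` {p \<in> space (PiM {..<n} (\<lambda>_. Pw) \<Otimes>\<^sub>M ?X). ratio_event n A b \<delta> (fst p) (snd p)})
      \<le> measure ?X {y \<in> space ?X. \<delta> * \<bar>b\<bar> * (\<Sum>i<n. (w i)\<^sup>2) < \<bar>\<Sum>j<n. mvec n (\<lambda>i j. A j i) w j * y j\<bar>}"
    by (intro X.finite_measure_mono) auto
  also have "\<dots> \<le> G"
    using opnorm_le1_transpose[OF A] R
    by (intro tail) (auto simp: opnorm_le1_def vnorm_def)
  finally show "measure ?X (Pair w -` {p \<in> space (PiM {..<n} (\<lambda>_. Pw) \<Otimes>\<^sub>M ?X). ratio_event n A b \<delta> (fst p) (snd p)}) \<le> G" .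
qed (use Pw Pxi G sets_ratio_event[OF sets_Pw sets_Pxi] in \<open>auto intro: prob_space_PiM\<close>)

section \<open>The hypotheses on b\<close>

lemma scaled_threshold_bounded_below:
  fixes b :: "nat \<Rightarrow> real"
  assumes t: "0 \<le> t" and C: "C > 0" and \<delta>: "\<delta> > 0"
    and b: "\<And>n. real n powr (- t / (1 + t)) \<le> C * \<bar>b n\<bar>"
  shows "\<forall>\<^sub>F n in sequentially. 0 < \<delta> * \<bar>b n\<bar> \<and>
    (\<delta> / C) powr (1 + t) \<le> (\<delta> * \<bar>b n\<bar> * real n) powr (1 + t) / real n"
  using eventually_gt_at_top[of 0]
proof eventually_elim
  case (elim n)
  have "0 < real n powr (- t / (1 + t))"
    using elim by simp
  then have b_pos: "0 < \<bar>b n\<bar>"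
    using b[of n] C by (smt (verit) mult_nonneg_nonpos)
  have "1 / (1 + t) = - t / (1 + t) + 1"
    using t by (simp add: field_simps)
  then have "real n powr (1 / (1 + t)) = real n powr (- t / (1 + t)) * real n powr 1"
    by (simp only: powr_add)
  then have "real n powr (1 / (1 + t)) = real n powr (- t / (1 + t)) * real n"
    using elim by simp
  then have "\<delta> / C * real n powr (1 / (1 + t)) = \<delta> / C * real n powr (- t / (1 + t)) * real n"
    by simp
  also have "\<dots> \<le> \<delta> / C * (C * \<bar>b n\<bar>) * real n"
    using b[of n] C \<delta> by (intro mult_right_mono mult_left_mono) auto
  also have "\<dots> = \<delta> * \<bar>b n\<bar> * real n"
    using C by simp
  finally have "(\<delta> / C * real n powr (1 / (1 + t))) powr (1 + t) \<le> (\<delta> * \<bar>b n\<bar> * real n) powr (1 + t)"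
    using t C \<delta> by (intro powr_mono2) auto
  moreover have "(\<delta> / C * real n powr (1 / (1 + t))) powr (1 + t) = (\<delta> / C) powr (1 + t) * real n"
    using t C \<delta> by (subst powr_mult) (auto simp: powr_powr)
  ultimately have "(\<delta> / C) powr (1 + t) * real n \<le> (\<delta> * \<bar>b n\<bar> * real n) powr (1 + t)"
    by simp
  then show ?case
    using \<delta> b_pos elim by (simp add: field_simps)
qed

lemma scaled_threshold_growth:
  fixes b :: "nat \<Rightarrow> real"
  assumes \<delta>: "\<delta> > 0" and b: "\<forall>\<^sub>F n in sequentially. b n \<noteq> 0"
    and lim: "(\<lambda>n. real n powr (- 1 / 2) / \<bar>b n\<bar>) \<longlonglongrightarrow> 0"
  shows "filterlim (\<lambda>n. (\<delta> * \<bar>b n\<bar> * real n) powr 2 / real n) at_top sequentially"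
proof -
  define q where "q n = real n powr (- 1 / 2) / \<bar>b n\<bar>" for n
  have "((\<lambda>n. (q n)\<^sup>2) \<longlongrightarrow> 0) sequentially"
    using tendsto_power[OF lim, of 2] by (simp add: q_def)
  moreover have "\<forall>\<^sub>F n in sequentially. 0 < (q n)\<^sup>2"
    using b eventually_gt_at_top[of 0] by eventually_elim (simp add: q_def)
  ultimately have "filterlim (\<lambda>n. (q n)\<^sup>2) (at_right 0) sequentially"
    by (rule tendsto_imp_filterlim_at_right)
  then have "filterlim (\<lambda>n. inverse ((q n)\<^sup>2)) at_top sequentially"
    by (rule filterlim_compose[OF filterlim_inverse_at_top_right])
  then have "filterlim (\<lambda>n. \<delta>\<^sup>2 * inverse ((q n)\<^sup>2)) at_top sequentially"
    using \<delta> by (intro filterlim_tendsto_pos_mult_at_top[OF tendsto_const]) auto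
  moreover have "\<forall>\<^sub>F n in sequentially. \<delta>\<^sup>2 * inverse ((q n)\<^sup>2) = (\<delta> * \<bar>b n\<bar> * real n) powr 2 / real n"
    using b eventually_gt_at_top[of 0]
  proof eventually_elim
    case (elim n)
    have "(real n powr (- 1 / 2))\<^sup>2 = real n powr (- 1 / 2 + - 1 / 2)"
      by (simp only: power2_eq_square powr_add)
    also have "\<dots> = 1 / real n"
      by (simp add: powr_minus_divide)
    finally have "(q n)\<^sup>2 = 1 / (real n * (b n)\<^sup>2)"
      by (simp add: q_def power_divide)
    then show ?case
      using elim \<delta> by (simp add: powr_numeral power_mult_distrib power2_eq_square)
  qed
  ultimately show ?thesis
    by (rule filterlim_mono_eventually[OF _ order_refl order_refl])
qed

lemma (in centred_abs_moment) eventually_weighted_sum_tail_le_of_threshold: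
  fixes b :: "nat \<Rightarrow> real"
  assumes s: "s = 1 + t" and t: "t \<le> 1" and c: "c > 0" and \<delta>: "\<delta> > 0" and \<epsilon>: "\<epsilon> > 0"
    and lower: "t < 1 \<Longrightarrow> \<exists>C>0. \<forall>n. real n powr (- t / (1 + t)) \<le> C * \<bar>b n\<bar>"
    and growth: "t = 1 \<Longrightarrow> (\<forall>\<^sub>F n in sequentially. b n \<noteq> 0) \<and>
                   (\<lambda>n. real n powr (- 1 / 2) / \<bar>b n\<bar>) \<longlonglongrightarrow> 0"
  shows "\<forall>\<^sub>F n in sequentially. 0 < \<delta> * \<bar>b n\<bar> \<and> (\<forall>u R. c * real n \<le> R \<longrightarrow> (\<Sum>j<n. (u j)\<^sup>2) \<le> R \<longrightarrow>
      measure (PiM {..<n} (\<lambda>_. P)) {y \<in> space (PiM {..<n} (\<lambda>_. P)). \<delta> * \<bar>b n\<bar> * R < \<bar>\<Sum>j<n. u j * y j\<bar>} \<le> \<epsilon>)"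
proof (cases "t < 1")
  case True
  then obtain C where "C > 0" "\<And>n. real n powr (- t / (1 + t)) \<le> C * \<bar>b n\<bar>"
    using lower by blast
  then have "\<forall>\<^sub>F n in sequentially. 0 < \<delta> * \<bar>b n\<bar> \<and>
      (\<delta> / C) powr (1 + t) \<le> (\<delta> * \<bar>b n\<bar> * real n) powr (1 + t) / real n"
    using s one_le_s \<delta> by (intro scaled_threshold_bounded_below) auto
  then show ?thesis
    using eventually_weighted_sum_tail_le_of_lower_bound[of c \<epsilon> "(\<delta> / C) powr (1 + t)" "\<lambda>n. \<delta> * \<bar>b n\<bar>"]
      True s c \<epsilon> \<open>C > 0\<close> \<delta> by (auto simp: eventually_conj_iff)
next
  case False
  then have t: "t = 1"
    using t by simp
  then have b: "\<forall>\<^sub>F n in sequentially. b n \<noteq> 0"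
    and lim: "(\<lambda>n. real n powr (- 1 / 2) / \<bar>b n\<bar>) \<longlonglongrightarrow> 0"
    using growth by auto
  have pos: "\<forall>\<^sub>F n in sequentially. 0 < \<delta> * \<bar>b n\<bar>"
    using b by eventually_elim (use \<delta> in simp)
  have "filterlim (\<lambda>n. (\<delta> * \<bar>b n\<bar> * real n) powr s / real n) at_top sequentially"
    using scaled_threshold_growth[OF \<delta> b lim] s t by simp
  with pos show ?thesis
    using eventually_weighted_sum_tail_le_of_growth[OF c \<epsilon> pos] by (simp add: eventually_conj_iff)
qed

lemma (in centred_abs_moment) eventually_prob_ratio_event_le:
  fixes b :: "nat \<Rightarrow> real" and M :: "nat \<Rightarrow> nat \<Rightarrow> nat \<Rightarrow> real" and Pw :: "real measure"
  assumes s: "s = 1 + t" and t: "t \<le> 1" and Pw: "prob_space Pw" "sets Pw = sets borel"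
    and M: "\<And>n. opnorm_le1 n (M n)" and c: "c > 0" and \<delta>: "\<delta> > 0" and \<epsilon>: "\<epsilon> > 0"
    and lower: "t < 1 \<Longrightarrow> \<exists>C>0. \<forall>n. real n powr (- t / (1 + t)) \<le> C * \<bar>b n\<bar>"
    and growth: "t = 1 \<Longrightarrow> (\<forall>\<^sub>F n in sequentially. b n \<noteq> 0) \<and>
                   (\<lambda>n. real n powr (- 1 / 2) / \<bar>b n\<bar>) \<longlonglongrightarrow> 0"
  shows "\<forall>\<^sub>F n in sequentially.
    measure (PiM {..<n} (\<lambda>_. Pw) \<Otimes>\<^sub>M PiM {..<n} (\<lambda>_. P))
      {p \<in> space (PiM {..<n} (\<lambda>_. Pw) \<Otimes>\<^sub>M PiM {..<n} (\<lambda>_. P)). ratio_event n (M n) (b n) \<delta> (fst p) (snd p)}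
    \<le> measure (PiM {..<n} (\<lambda>_. Pw)) {w \<in> space (PiM {..<n} (\<lambda>_. Pw)). (\<Sum>i<n. (w i)\<^sup>2) < c * real n} + \<epsilon>"
proof -
  have "\<forall>\<^sub>F n in sequentially. 0 < \<delta> * \<bar>b n\<bar> \<and> (\<forall>u R. c * real n \<le> R \<longrightarrow> (\<Sum>j<n. (u j)\<^sup>2) \<le> R \<longrightarrow>
      measure (PiM {..<n} (\<lambda>_. P)) {y \<in> space (PiM {..<n} (\<lambda>_. P)). \<delta> * \<bar>b n\<bar> * R < \<bar>\<Sum>j<n. u j * y j\<bar>} \<le> \<epsilon>)"
    by (rule eventually_weighted_sum_tail_le_of_threshold[OF s t c \<delta> \<epsilon>]) (fact lower, fact growth)
  with eventually_gt_at_top[of 0] show ?thesis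
    by eventually_elim (use Pw M c \<delta> \<epsilon> in \<open>auto intro!: prob_ratio_event_le prob_space_axioms sets_eq_borel\<close>)
qed

theorem lemmaA6:
  fixes t \<delta> :: real and M :: "nat \<Rightarrow> nat \<Rightarrow> nat \<Rightarrow> real" and b :: "nat \<Rightarrow> real"
    and Pw Pxi :: "real measure"
  assumes "0 \<le> t" and "t \<le> 1"
    and "\<And>n. opnorm_le1 n (M n)"
    and "t < 1 \<Longrightarrow> \<exists>C>0. \<forall>n. real n powr (- t / (1 + t)) \<le> C * \<bar>b n\<bar>"
    and "t = 1 \<Longrightarrow> (\<forall>\<^sub>F n in sequentially. b n \<noteq> 0) \<and>
                   (\<lambda>n. real n powr (- 1 / 2) / \<bar>b n\<bar>) \<longlonglongrightarrow> 0"
    and "Pw \<in> Dclass 1 \<union> Dclass 2"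
    and "Pxi \<in> Dclass (1 + t)"
    and "\<delta> > 0"
  shows "(\<lambda>n. measure (PiM {..<n} (\<lambda>_. Pw) \<Otimes>\<^sub>M PiM {..<n} (\<lambda>_. Pxi))
            {p \<in> space (PiM {..<n} (\<lambda>_. Pw) \<Otimes>\<^sub>M PiM {..<n} (\<lambda>_. Pxi)).
               ratio_event n (M n) (b n) \<delta> (fst p) (snd p)}) \<longlonglongrightarrow> 0"
proof -
  interpret \<xi>: centred_abs_moment Pxi "1 + t"
    using assms(1,2,7) by (intro Dclass_centred_abs_moment) auto
  obtain s where "Pw \<in> Dclass s"
    using assms(6) by blast
  then have Pw: "prob_space Pw" "sets Pw = sets borel" "\<not> (AE x in Pw. x = 0)"
    using Dclass_not_AE_zero[of Pw s] by (simp_all add: Dclass_def)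
  then obtain c where c: "c > 0" and few_small_w: "(\<lambda>n. measure (PiM {..<n} (\<lambda>_. Pw))
      {w \<in> space (PiM {..<n} (\<lambda>_. Pw)). (\<Sum>i<n. (w i)\<^sup>2) < c * real n}) \<longlonglongrightarrow> 0"
    using sum_squares_lower_bound by blast
  show ?thesis
    using assms(3-5,8) Pw c
    by (intro tendsto_0_of_eventually_le_add[OF _ few_small_w] \<xi>.eventually_prob_ratio_event_le[OF refl assms(2)])
      auto
qed

end
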